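(* Fix a monomial order on $S$. If $J$ is an ideal of $S$ and $(E_i)_{i\in\Lambda}$ is a family of monomial ideals of $S$ such that $(J,E_i)$ is a G-nice pair for all $i\in\Lambda$, then $(J,\sum_{i\in\Lambda}E_i)$ is a G-nice pair.
   Context: $K$ is a field and $S=K[x_1,\ldots,x_n]$ with a fixed monomial order. For $0\neq f\in S$, $\mathrm{in}(f)$ denotes its leading monomial; for an ideal $I$, $\mathrm{in}(I)$ is the ideal generated by the leading monomials of the nonzero elements of $I$. A pair $(J,E)$ of ideals of $S$ is called Gröbner nice (G-nice) if $\mathrm{in}(J+E)=\mathrm{in}(J)+\mathrm{in}(E)$. *)

theory Defs
  imports "HOL-Library.Poly_Mapping"
begin

text \<open>Monomials in the variables indexed by the finite type 'n are exponent vectors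
 (functions from n to nat with finite support); polynomials over 'k are finitely supported maps from monomials
 to coefficients, i.e. elements of the polynomial ring S = K[x_i : i in 'n].\<close>

type_synonym ('n, 'k) mpoly = "('n \<Rightarrow>\<^sub>0 nat) \<Rightarrow>\<^sub>0 'k"

definition monomial_order :: "(('n \<Rightarrow>\<^sub>0 nat) \<Rightarrow> ('n \<Rightarrow>\<^sub>0 nat) \<Rightarrow> bool) \<Rightarrow> bool" where
  "monomial_order ord \<longleftrightarrow>
     (\<forall>a. ord a a) \<and>
     (\<forall>a b. ord a b \<and> ord b a \<longrightarrow> a = b) \<and>
     (\<forall>a b c. ord a b \<and> ord b c \<longrightarrow> ord a c) \<and>
     (\<forall>a b. ord a b \<or> ord b a) \<and>
     (\<forall>a b c. ord a b \<longrightarrow> ord (a + c) (b + c)) \<and>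
     wfP (\<lambda>a b. ord a b \<and> a \<noteq> b)"

definition is_ideal :: "'a::comm_ring_1 set \<Rightarrow> bool" where
  "is_ideal I \<longleftrightarrow> 0 \<in> I \<and> (\<forall>x\<in>I. \<forall>y\<in>I. x + y \<in> I) \<and> (\<forall>r. \<forall>x\<in>I. r * x \<in> I)"

definition ideal_gen :: "'a::comm_ring_1 set \<Rightarrow> 'a set" where
  "ideal_gen G = \<Inter> {I. is_ideal I \<and> G \<subseteq> I}"

definition monom :: "('n \<Rightarrow>\<^sub>0 nat) \<Rightarrow> ('n, 'k::zero_neq_one) mpoly" where
  "monom t = Poly_Mapping.single t 1"

definition lead_exp :: "(('n \<Rightarrow>\<^sub>0 nat) \<Rightarrow> ('n \<Rightarrow>\<^sub>0 nat) \<Rightarrow> bool) \<Rightarrow> ('n, 'k::zero) mpoly \<Rightarrow> ('n \<Rightarrow>\<^sub>0 nat)" where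
  "lead_exp ord f = (THE t. t \<in> Poly_Mapping.keys f \<and> (\<forall>s\<in>Poly_Mapping.keys f. ord s t))"

definition init :: "(('n \<Rightarrow>\<^sub>0 nat) \<Rightarrow> ('n \<Rightarrow>\<^sub>0 nat) \<Rightarrow> bool) \<Rightarrow> ('n, 'k::zero_neq_one) mpoly \<Rightarrow> ('n, 'k) mpoly" where
  "init ord f = monom (lead_exp ord f)"

definition init_ideal :: "(('n \<Rightarrow>\<^sub>0 nat) \<Rightarrow> ('n \<Rightarrow>\<^sub>0 nat) \<Rightarrow> bool) \<Rightarrow> ('n, 'k::comm_ring_1) mpoly set \<Rightarrow> ('n, 'k) mpoly set" where
  "init_ideal ord I = ideal_gen {init ord f | f. f \<in> I \<and> f \<noteq> 0}"

definition ideal_sum :: "'a::comm_ring_1 set \<Rightarrow> 'a set \<Rightarrow> 'a set" where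
  "ideal_sum I J = ideal_gen (I \<union> J)"

definition ideal_Sum :: "'i set \<Rightarrow> ('i \<Rightarrow> 'a::comm_ring_1 set) \<Rightarrow> 'a set" where
  "ideal_Sum \<Lambda> E = ideal_gen (\<Union>i\<in>\<Lambda>. E i)"

definition monomial_ideal :: "('n, 'k::comm_ring_1) mpoly set \<Rightarrow> bool" where
  "monomial_ideal E \<longleftrightarrow> (\<exists>M. E = ideal_gen (monom ` M))"

definition G_nice :: "(('n \<Rightarrow>\<^sub>0 nat) \<Rightarrow> ('n \<Rightarrow>\<^sub>0 nat) \<Rightarrow> bool) \<Rightarrow> ('n, 'k::comm_ring_1) mpoly set \<Rightarrow> ('n, 'k) mpoly set \<Rightarrow> bool" where
  "G_nice ord J E \<longleftrightarrow> init_ideal ord (ideal_sum J E) = ideal_sum (init_ideal ord J) (init_ideal ord E)"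

end

theory Submission
  imports Defs
begin

text \<open>
  For the monomial ideal E spanned by the monomials with exponents in M, the pair (J, E) is
  G-nice exactly when every leading exponent of J + E is a multiple of a leading exponent of J
  or of an element of M. Under this condition every nonzero f in J + E has a standard
  representation f = j + e in which no exponent of j or e exceeds the leading exponent of f:
  cancel the leading term of f by an element of J or of E and recurse, the order being
  well-founded.

  Now let E be the sum of the E_i and suppose the leading exponent t of some f in J + E is a
  multiple neither of a leading exponent of J nor of a generator of E. Among the j in J with
  f - j in E choose one whose leading exponent s is minimal. Then s \<noteq> t, and comparing f = j +
  (f - j) puts s into some E_i. The standard representation for (J, E_i) of j minus its leading
  term yields j' in J with j - j' in E_i and leading exponent below s, contradicting minimality.
\<close>

section \<open>Ideals\<close>

lemma ideal_gen_is_ideal: "is_ideal (ideal_gen G)"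
  unfolding ideal_gen_def is_ideal_def by auto

lemma ideal_gen_superset: "G \<subseteq> ideal_gen G"
  unfolding ideal_gen_def by auto

lemma ideal_gen_least: "is_ideal I \<Longrightarrow> G \<subseteq> I \<Longrightarrow> ideal_gen G \<subseteq> I"
  unfolding ideal_gen_def by auto

lemma ideal_add: "is_ideal I \<Longrightarrow> x \<in> I \<Longrightarrow> y \<in> I \<Longrightarrow> x + y \<in> I"
  unfolding is_ideal_def by auto

lemma ideal_mult: "is_ideal I \<Longrightarrow> x \<in> I \<Longrightarrow> r * x \<in> I"
  unfolding is_ideal_def by auto

lemma ideal_zero: "is_ideal I \<Longrightarrow> 0 \<in> I"
  unfolding is_ideal_def by auto

lemma ideal_diff: "is_ideal I \<Longrightarrow> x \<in> I \<Longrightarrow> y \<in> I \<Longrightarrow> x - y \<in> I"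
  using ideal_add[of I x "- 1 * y"] ideal_mult[of I y "- 1"] by simp

lemma ideal_sum_eq:
  assumes I: "is_ideal I" and J: "is_ideal J"
  shows "ideal_sum I J = {a + b | a b. a \<in> I \<and> b \<in> J}"
proof
  let ?S = "{a + b | a b. a \<in> I \<and> b \<in> J}"
  have "is_ideal ?S"
    unfolding is_ideal_def
  proof (intro conjI ballI allI)
    have "(0::'a) = 0 + 0" by simp
    then show "0 \<in> ?S" using I J ideal_zero by blast
  next
    fix x y assume "x \<in> ?S" "y \<in> ?S"
    then obtain a b a' b' where "x = a + b" "y = a' + b'" "a \<in> I" "b \<in> J" "a' \<in> I" "b' \<in> J"
      by blast
    moreover have "x + y = (a + a') + (b + b')" using \<open>x = a + b\<close> \<open>y = a' + b'\<close> by simp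
    ultimately show "x + y \<in> ?S" using I J ideal_add by blast
  next
    fix r x assume "x \<in> ?S"
    then obtain a b where "x = a + b" "a \<in> I" "b \<in> J" by blast
    moreover have "r * x = r * a + r * b" using \<open>x = a + b\<close> by (simp add: distrib_left)
    ultimately show "r * x \<in> ?S" using I J ideal_mult by blast
  qed
  moreover have "I \<union> J \<subseteq> ?S"
  proof
    fix x assume "x \<in> I \<union> J"
    moreover have "x = x + 0" "x = 0 + x" by simp_all
    ultimately show "x \<in> ?S" using I J ideal_zero by blast
  qed
  ultimately show "ideal_sum I J \<subseteq> ?S"
    unfolding ideal_sum_def by (rule ideal_gen_least)
  show "?S \<subseteq> ideal_sum I J"
  proof (rule subsetI, elim CollectE exE conjE)
    fix x a b assume "x = a + b" "a \<in> I" "b \<in> J"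
    then have "a \<in> ideal_gen (I \<union> J)" "b \<in> ideal_gen (I \<union> J)"
      using ideal_gen_superset by blast+
    then show "x \<in> ideal_sum I J"
      unfolding ideal_sum_def \<open>x = a + b\<close> by (rule ideal_add[OF ideal_gen_is_ideal])
  qed
qed

lemma ideal_gen_Un_ideal_gen: "ideal_gen (ideal_gen A \<union> ideal_gen B) = ideal_gen (A \<union> B)"
proof
  show "ideal_gen (ideal_gen A \<union> ideal_gen B) \<subseteq> ideal_gen (A \<union> B)"
    by (intro ideal_gen_least ideal_gen_is_ideal Un_least) (auto intro: ideal_gen_superset[THEN subsetD])
  show "ideal_gen (A \<union> B) \<subseteq> ideal_gen (ideal_gen A \<union> ideal_gen B)"
    by (intro ideal_gen_least ideal_gen_is_ideal) (auto intro: ideal_gen_superset[THEN subsetD])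
qed

lemma ideal_gen_UN_ideal_gen: "ideal_gen (\<Union>i\<in>L. ideal_gen (A i)) = ideal_gen (\<Union>i\<in>L. A i)"
proof
  have "ideal_gen (A i) \<subseteq> ideal_gen (\<Union>i\<in>L. A i)" if "i \<in> L" for i
    using that by (intro ideal_gen_least ideal_gen_is_ideal) (auto intro: ideal_gen_superset[THEN subsetD])
  then show "ideal_gen (\<Union>i\<in>L. ideal_gen (A i)) \<subseteq> ideal_gen (\<Union>i\<in>L. A i)"
    by (intro ideal_gen_least ideal_gen_is_ideal) blast
  show "ideal_gen (\<Union>i\<in>L. A i) \<subseteq> ideal_gen (\<Union>i\<in>L. ideal_gen (A i))"
    by (intro ideal_gen_least ideal_gen_is_ideal) (blast intro: ideal_gen_superset[THEN subsetD])
qed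

section \<open>Monomial ideals\<close>

abbreviation keys :: "('a \<Rightarrow>\<^sub>0 'b::zero) \<Rightarrow> 'a set" where "keys \<equiv> Poly_Mapping.keys"
abbreviation lookup :: "('a \<Rightarrow>\<^sub>0 'b::zero) \<Rightarrow> 'a \<Rightarrow> 'b" where "lookup \<equiv> Poly_Mapping.lookup"
abbreviation single :: "'a \<Rightarrow> 'b::zero \<Rightarrow> 'a \<Rightarrow>\<^sub>0 'b" where "single \<equiv> Poly_Mapping.single"

definition multiples :: "('n \<Rightarrow>\<^sub>0 nat) set \<Rightarrow> ('n \<Rightarrow>\<^sub>0 nat) set" where
  "multiples M = {s + d | s d. s \<in> M}"

definition mono_ideal :: "('n \<Rightarrow>\<^sub>0 nat) set \<Rightarrow> ('n, 'k::comm_ring_1) mpoly set" where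
  "mono_ideal M = {p. keys p \<subseteq> multiples M}"

lemma multiples_superset: "M \<subseteq> multiples M"
  unfolding multiples_def by (metis (mono_tags, lifting) add_0_right mem_Collect_eq subsetI)

lemma multiples_mono: "A \<subseteq> B \<Longrightarrow> multiples A \<subseteq> multiples B"
  unfolding multiples_def by blast

lemma multiples_Un: "multiples (A \<union> B) = multiples A \<union> multiples B"
  unfolding multiples_def by auto

lemma multiples_UN: "multiples (\<Union>i\<in>L. M i) = (\<Union>i\<in>L. multiples (M i))"
  unfolding multiples_def by auto

lemma multiples_add:
  assumes "t \<in> multiples M" shows "d + t \<in> multiples M"
proof -
  obtain s e where "s \<in> M" "t = s + e" using assms unfolding multiples_def by blast
  then have "d + t = s + (d + e)" by (simp add: ac_simps)
  with \<open>s \<in> M\<close> show ?thesis unfolding multiples_def by blast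
qed

lemma multiples_subset:
  assumes "A \<subseteq> multiples B" shows "multiples A \<subseteq> multiples B"
proof
  fix t assume "t \<in> multiples A"
  then obtain s d where "s \<in> A" "t = d + s" unfolding multiples_def by (auto simp: add.commute)
  then show "t \<in> multiples B" using assms multiples_add by blast
qed
lemma mono_ideal_is_ideal: "is_ideal (mono_ideal M :: ('n, 'k::comm_ring_1) mpoly set)"
  unfolding is_ideal_def mono_ideal_def
proof (intro conjI ballI allI)
  fix p q :: "('n, 'k) mpoly"
  assume "p \<in> {p. keys p \<subseteq> multiples M}" "q \<in> {p. keys p \<subseteq> multiples M}"
  then show "p + q \<in> {p. keys p \<subseteq> multiples M}" using keys_add[of p q] by auto
next
  fix r p :: "('n, 'k) mpoly"
  assume "p \<in> {p. keys p \<subseteq> multiples M}"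
  then show "r * p \<in> {p. keys p \<subseteq> multiples M}"
    using keys_mult[of r p] multiples_add by fastforce
qed simp

lemma mono_ideal_mono: "A \<subseteq> B \<Longrightarrow> mono_ideal A \<subseteq> mono_ideal B"
  unfolding mono_ideal_def multiples_def by blast

lemma single_in_mono_ideal: "t \<in> multiples M \<Longrightarrow> single t c \<in> mono_ideal M"
  unfolding mono_ideal_def by simp

lemma monom_nonzero: "monom t \<noteq> (0 :: ('n, 'k::zero_neq_one) mpoly)"
  unfolding monom_def by (metis lookup_single_eq lookup_zero zero_neq_one)

lemma monom_in_mono_ideal_iff:
  "(monom t :: ('n, 'k::comm_ring_1) mpoly) \<in> mono_ideal M \<longleftrightarrow> t \<in> multiples M"
  unfolding mono_ideal_def monom_def by simp

lemma mono_ideal_eq_iff: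
  "(mono_ideal A :: ('n, 'k::comm_ring_1) mpoly set) = mono_ideal B \<longleftrightarrow> multiples A = multiples B"
  by (metis monom_in_mono_ideal_iff mono_ideal_def set_eqI)

lemma mono_ideal_subset:
  fixes I :: "('n, 'k::comm_ring_1) mpoly set"
  assumes "is_ideal I" "monom ` M \<subseteq> I"
  shows "mono_ideal M \<subseteq> I"
proof
  fix p :: "('n, 'k) mpoly" assume "p \<in> mono_ideal M"
  then show "p \<in> I"
  proof (induction "card (keys p)" arbitrary: p)
    case 0
    then show ?case using assms(1) ideal_zero by simp
  next
    case (Suc n)
    then obtain t where t: "t \<in> keys p" by (metis card.empty ex_in_conv nat.distinct(1))
    then obtain s d where "s \<in> M" "t = d + s"
      using Suc.prems unfolding mono_ideal_def multiples_def by (force simp: add.commute)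
    then have "single t (lookup p t) = single d (lookup p t) * monom s"
      unfolding monom_def by (simp add: mult_single)
    then have "single t (lookup p t) \<in> I" using assms \<open>s \<in> M\<close> ideal_mult by fastforce
    moreover have "p - single t (lookup p t) \<in> I"
    proof (rule Suc.hyps)
      have "keys (p - single t (lookup p t)) = keys p - {t}"
        by (auto simp: in_keys_iff lookup_minus lookup_single when_def split: if_splits)
      then show "n = card (keys (p - single t (lookup p t)))" "p - single t (lookup p t) \<in> mono_ideal M"
        using Suc t unfolding mono_ideal_def by auto
    qed
    ultimately show ?case using assms(1) ideal_add by fastforce
  qed
qed

lemma ideal_gen_monom: "ideal_gen (monom ` M :: ('n, 'k::comm_ring_1) mpoly set) = mono_ideal M"
proof
  show "ideal_gen (monom ` M) \<subseteq> mono_ideal M"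
    using monom_in_mono_ideal_iff multiples_superset
    by (intro ideal_gen_least mono_ideal_is_ideal) blast
  show "mono_ideal M \<subseteq> ideal_gen (monom ` M)"
    by (intro mono_ideal_subset ideal_gen_is_ideal ideal_gen_superset)
qed

lemma monomial_ideal_iff: "monomial_ideal E \<longleftrightarrow> (\<exists>M. E = mono_ideal M)"
  unfolding monomial_ideal_def ideal_gen_monom ..

lemma ideal_Sum_mono_ideal:
  "ideal_Sum L (\<lambda>i. mono_ideal (M i) :: ('n, 'k::comm_ring_1) mpoly set) = mono_ideal (\<Union>i\<in>L. M i)"
  unfolding ideal_Sum_def ideal_gen_monom[symmetric] ideal_gen_UN_ideal_gen image_UN ..

lemma ideal_sum_mono_ideal:
  "ideal_sum (mono_ideal A) (mono_ideal B :: ('n, 'k::comm_ring_1) mpoly set) = mono_ideal (A \<union> B)"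
  unfolding ideal_sum_def ideal_gen_monom[symmetric] ideal_gen_Un_ideal_gen image_Un ..

lemma lookup_single_mult:
  "lookup (single d a * (p :: ('n, 'k::comm_ring_1) mpoly)) (d + t) = a * lookup p t"
  unfolding lookup_mult by (simp add: lookup_single when_mult Sum_any_when_equal)

lemma keys_single_mult: "keys (single d a * (p :: ('n, 'k::comm_ring_1) mpoly)) \<subseteq> (+) d ` keys p"
  using keys_mult[of "single d a" p] by (auto split: if_splits)

section \<open>Leading exponents\<close>

locale monomial_ord =
  fixes ord :: "('n \<Rightarrow>\<^sub>0 nat) \<Rightarrow> ('n \<Rightarrow>\<^sub>0 nat) \<Rightarrow> bool"
  assumes monomial_order: "monomial_order ord"
begin

abbreviation ord_less :: "('n \<Rightarrow>\<^sub>0 nat) \<Rightarrow> ('n \<Rightarrow>\<^sub>0 nat) \<Rightarrow> bool" where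
  "ord_less a b \<equiv> ord a b \<and> a \<noteq> b"

lemma ord_refl: "ord a a"
  using monomial_order unfolding monomial_order_def by blast

lemma ord_antisym: "ord a b \<Longrightarrow> ord b a \<Longrightarrow> a = b"
  using monomial_order unfolding monomial_order_def by blast

lemma ord_trans: "ord a b \<Longrightarrow> ord b c \<Longrightarrow> ord a c"
  using monomial_order unfolding monomial_order_def by blast

lemma ord_total: "ord a b \<or> ord b a"
  using monomial_order unfolding monomial_order_def by blast

lemma ord_add_left: "ord a b \<Longrightarrow> ord (c + a) (c + b)"
  using monomial_order unfolding monomial_order_def by (metis add.commute)

lemma ord_le_less_trans: "ord a b \<Longrightarrow> ord_less b c \<Longrightarrow> ord_less a c"
  using ord_trans ord_antisym by blast

lemma wfP_ord_less: "wfP ord_less"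
  using monomial_order unfolding monomial_order_def by blast

lemma finite_has_ord_max:
  assumes "finite S" "S \<noteq> {}"
  shows "\<exists>m\<in>S. \<forall>s\<in>S. ord s m"
  using assms
proof (induction S rule: finite_ne_induct)
  case (singleton x)
  then show ?case using ord_refl by auto
next
  case (insert x F)
  then obtain m where "m \<in> F" "\<forall>s\<in>F. ord s m" by blast
  then show ?case using ord_total ord_trans ord_refl by (metis insert_iff)
qed

definition keys_below :: "('n \<Rightarrow>\<^sub>0 nat) \<Rightarrow> ('n, 'k::zero) mpoly \<Rightarrow> bool" where
  "keys_below \<delta> p \<longleftrightarrow> (\<forall>s\<in>keys p. ord s \<delta>)"

lemma keys_below_zero: "keys_below \<delta> 0"
  unfolding keys_below_def by simp

lemma keys_below_add: "keys_below \<delta> p \<Longrightarrow> keys_below \<delta> q \<Longrightarrow> keys_below \<delta> (p + q)"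
  using keys_add[of p q] unfolding keys_below_def by auto

lemma keys_below_diff: "keys_below \<delta> p \<Longrightarrow> keys_below \<delta> q \<Longrightarrow> keys_below \<delta> (p - q)"
  using keys_diff[of p q] unfolding keys_below_def by auto

lemma keys_below_trans: "keys_below \<delta> p \<Longrightarrow> ord \<delta> \<delta>' \<Longrightarrow> keys_below \<delta>' p"
  unfolding keys_below_def using ord_trans by blast

lemma keys_below_single: "keys_below \<delta> (single \<delta> c)"
  unfolding keys_below_def using ord_refl by simp

lemma lead_exp_eqI:
  assumes "t \<in> keys p" "keys_below t p"
  shows "lead_exp ord p = t"
  unfolding lead_exp_def using assms ord_antisym unfolding keys_below_def
  by (intro the_equality) auto

lemma lead_exp_in_keys_below:
  fixes p :: "('n, 'k::zero) mpoly"
  assumes "p \<noteq> 0"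
  shows "lead_exp ord p \<in> keys p" "keys_below (lead_exp ord p) p"
proof -
  obtain m where "m \<in> keys p" "keys_below m p"
    using finite_has_ord_max[of "keys p"] assms unfolding keys_below_def by auto
  then show "lead_exp ord p \<in> keys p" "keys_below (lead_exp ord p) p"
    using lead_exp_eqI by auto
qed

lemma lead_exp_less:
  fixes p :: "('n, 'k::zero) mpoly"
  assumes "p \<noteq> 0" "keys_below \<delta> p" "lookup p \<delta> = 0"
  shows "ord_less (lead_exp ord p) \<delta>"
  using assms lead_exp_in_keys_below(1)[OF assms(1)] unfolding keys_below_def
  by (metis in_keys_iff)

lemma lead_exp_add_cases:
  fixes p q :: "('n, 'k::comm_monoid_add) mpoly"
  assumes p: "p \<noteq> 0" and pq: "p + q \<noteq> 0"
  shows "lead_exp ord (p + q) = lead_exp ord p \<or> lead_exp ord p \<in> keys q \<or> lead_exp ord (p + q) \<in> keys q"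
proof -
  let ?s = "lead_exp ord p" and ?t = "lead_exp ord (p + q)"
  note lead_p = lead_exp_in_keys_below[OF p] and lead_pq = lead_exp_in_keys_below[OF pq]
  consider "ord ?s ?t" | "ord ?t ?s" using ord_total by blast
  then show ?thesis
  proof cases
    case 1
    then have "?t = ?s \<or> ?t \<notin> keys p"
      using lead_p(2) ord_antisym unfolding keys_below_def by blast
    then show ?thesis
      using lead_pq(1) by (auto simp: in_keys_iff lookup_add)
  next
    case 2
    then have "?t = ?s \<or> ?s \<notin> keys (p + q)"
      using lead_pq(2) ord_antisym unfolding keys_below_def by blast
    then show ?thesis
      using lead_p(1) by (auto simp: in_keys_iff lookup_add)
  qed
qed

lemma lead_exp_monom: "lead_exp ord (monom t :: ('n, 'k::zero_neq_one) mpoly) = t"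
  unfolding monom_def by (rule lead_exp_eqI) (simp_all add: keys_below_single)

lemma keys_below_single_mult:
  fixes g :: "('n, 'k::comm_ring_1) mpoly"
  assumes "g \<noteq> 0"
  shows "keys_below (d + lead_exp ord g) (single d a * g)"
  using keys_single_mult[of d a g] lead_exp_in_keys_below(2)[OF assms] ord_add_left
  unfolding keys_below_def by blast

definition lead_exps :: "('n, 'k::zero) mpoly set \<Rightarrow> ('n \<Rightarrow>\<^sub>0 nat) set" where
  "lead_exps A = {lead_exp ord f | f. f \<in> A \<and> f \<noteq> 0}"

lemma lead_exps_mono: "A \<subseteq> B \<Longrightarrow> lead_exps A \<subseteq> lead_exps B"
  unfolding lead_exps_def by blast

lemma init_ideal_eq_mono_ideal:
  "init_ideal ord (A :: ('n, 'k::comm_ring_1) mpoly set) = mono_ideal (lead_exps A)"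
proof -
  have "{init ord f | f. f \<in> A \<and> f \<noteq> 0} = monom ` lead_exps A"
    unfolding init_def lead_exps_def by blast
  then show ?thesis unfolding init_ideal_def by (simp add: ideal_gen_monom)
qed

lemma multiples_lead_exps_mono_ideal:
  "multiples (lead_exps (mono_ideal M :: ('n, 'k::comm_ring_1) mpoly set)) = multiples M"
proof (intro equalityI multiples_subset)
  show "lead_exps (mono_ideal M :: ('n, 'k) mpoly set) \<subseteq> multiples M"
    unfolding lead_exps_def mono_ideal_def using lead_exp_in_keys_below(1) by blast
  have "M \<subseteq> lead_exps (mono_ideal M :: ('n, 'k) mpoly set)"
  proof
    fix t assume "t \<in> M"
    then have "monom t \<in> (mono_ideal M :: ('n, 'k) mpoly set)"
      using multiples_superset monom_in_mono_ideal_iff by blast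
    moreover have "t = lead_exp ord (monom t :: ('n, 'k) mpoly)"
      by (simp only: lead_exp_monom)
    ultimately show "t \<in> lead_exps (mono_ideal M :: ('n, 'k) mpoly set)"
      unfolding lead_exps_def using monom_nonzero by blast
  qed
  then show "M \<subseteq> multiples (lead_exps (mono_ideal M :: ('n, 'k) mpoly set))"
    using multiples_superset by blast
qed

lemma G_nice_mono_ideal_iff:
  fixes J :: "('n, 'k::comm_ring_1) mpoly set"
  shows "G_nice ord J (mono_ideal M) \<longleftrightarrow>
    lead_exps (ideal_sum J (mono_ideal M)) \<subseteq> multiples (lead_exps J \<union> M)"
proof -
  let ?K = "ideal_sum J (mono_ideal M)"
  have "J \<subseteq> ?K" "mono_ideal M \<subseteq> ?K"
    unfolding ideal_sum_def using ideal_gen_superset by blast+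
  then have "lead_exps J \<subseteq> multiples (lead_exps ?K)"
    "M \<subseteq> multiples (lead_exps ?K)"
    using lead_exps_mono multiples_superset multiples_mono multiples_lead_exps_mono_ideal
    by (metis subset_trans)+
  then have lower: "multiples (lead_exps J \<union> M) \<subseteq> multiples (lead_exps ?K)"
    by (intro multiples_subset Un_least)
  have "G_nice ord J (mono_ideal M) \<longleftrightarrow> multiples (lead_exps ?K) = multiples (lead_exps J \<union> M)"
    unfolding G_nice_def init_ideal_eq_mono_ideal ideal_sum_mono_ideal mono_ideal_eq_iff
      multiples_Un multiples_lead_exps_mono_ideal ..
  also have "\<dots> \<longleftrightarrow> lead_exps ?K \<subseteq> multiples (lead_exps J \<union> M)"
    using lower multiples_subset[of "lead_exps ?K"] multiples_superset[of "lead_exps ?K"] by blast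
  finally show ?thesis .
qed

section \<open>Standard representations\<close>

lemma lead_term_in_ideal:
  fixes J :: "('n, 'k::field) mpoly set"
  assumes J: "is_ideal J" and \<delta>: "\<delta> \<in> multiples (lead_exps J)"
  shows "\<exists>q\<in>J. keys_below \<delta> q \<and> lookup q \<delta> = c"
proof -
  obtain g d where g: "g \<in> J" "g \<noteq> 0" and \<delta>_eq: "\<delta> = d + lead_exp ord g"
    using \<delta> unfolding multiples_def lead_exps_def by (auto simp: add.commute)
  define q where "q = single d (c / lookup g (lead_exp ord g)) * g"
  have "lookup g (lead_exp ord g) \<noteq> 0"
    using lead_exp_in_keys_below(1)[OF g(2)] by (simp add: in_keys_iff)
  then have "lookup q \<delta> = c"
    unfolding q_def \<delta>_eq lookup_single_mult by simp
  moreover have "keys_below \<delta> q"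
    unfolding q_def \<delta>_eq using g(2) by (rule keys_below_single_mult)
  moreover have "q \<in> J"
    unfolding q_def using J g(1) by (rule ideal_mult)
  ultimately show ?thesis by blast
qed

lemma standard_representation:
  fixes J :: "('n, 'k::field) mpoly set"
  assumes J: "is_ideal J"
    and nice: "lead_exps (ideal_sum J (mono_ideal M)) \<subseteq> multiples (lead_exps J \<union> M)"
    and f: "f \<in> ideal_sum J (mono_ideal M)" "f \<noteq> 0"
  shows "\<exists>j\<in>J. \<exists>e\<in>mono_ideal M. f = j + e \<and>
    keys_below (lead_exp ord f) j \<and> keys_below (lead_exp ord f) e"
proof -
  let ?E = "mono_ideal M :: ('n, 'k) mpoly set"
  have E: "is_ideal ?E" by (rule mono_ideal_is_ideal)
  have sum_eq: "ideal_sum J ?E = {a + b | a b. a \<in> J \<and> b \<in> ?E}"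
    using J E by (rule ideal_sum_eq)
  define \<delta> where "\<delta> = lead_exp ord f"
  from f \<delta>_def show ?thesis
  proof (induction \<delta> arbitrary: f rule: wfp_induct_rule[OF wfP_ord_less])
    case (1 \<delta> f)
    have lead: "\<delta> \<in> keys f" "keys_below \<delta> f"
      using lead_exp_in_keys_below[OF 1(3)] 1(4) by simp_all
    obtain q1 q2 where q: "q1 \<in> J" "q2 \<in> ?E" "keys_below \<delta> q1" "keys_below \<delta> q2"
      "lookup (q1 + q2) \<delta> = lookup f \<delta>"
    proof -
      have "\<delta> \<in> multiples (lead_exps J) \<union> multiples M"
        using nice 1(2,3) unfolding 1(4) lead_exps_def multiples_Un by blast
      then show ?thesis
      proof
        assume "\<delta> \<in> multiples (lead_exps J)"
        then obtain q where "q \<in> J" "keys_below \<delta> q" "lookup q \<delta> = lookup f \<delta>"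
          using lead_term_in_ideal[OF J] by blast
        with that[of q 0] show ?thesis
          using ideal_zero[OF E] by (simp add: keys_below_zero)
      next
        assume "\<delta> \<in> multiples M"
        with that[of 0 "single \<delta> (lookup f \<delta>)"] show ?thesis
          using ideal_zero[OF J] by (simp add: single_in_mono_ideal keys_below_zero keys_below_single)
      qed
    qed
    define r where "r = f - q1 - q2"
    have f_eq: "f = (r + q1) + q2" unfolding r_def by simp
    show ?case
    proof (cases "r = 0")
      case True
      then have "f = q1 + q2" using f_eq by simp
      then show ?thesis unfolding 1(4)[symmetric] using q by blast
    next
      case False
      obtain a b where "a \<in> J" "b \<in> ?E" "f = a + b" using 1(2) sum_eq by blast
      then have "r = (a - q1) + (b - q2)" unfolding r_def by simp
      then have r_in: "r \<in> ideal_sum J ?E"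
        using sum_eq ideal_diff[OF J \<open>a \<in> J\<close> q(1)] ideal_diff[OF E \<open>b \<in> ?E\<close> q(2)] by blast
      have r_below: "keys_below \<delta> r"
        unfolding r_def using lead(2) q(3,4) by (intro keys_below_diff)
      have "lookup r \<delta> = 0"
        using q(5) unfolding r_def by (simp add: lookup_minus lookup_add algebra_simps)
      then have less: "ord_less (lead_exp ord r) \<delta>"
        using False r_below by (rule lead_exp_less[rotated 2])
      obtain j e where je: "j \<in> J" "e \<in> ?E" "r = j + e"
        "keys_below (lead_exp ord r) j" "keys_below (lead_exp ord r) e"
        using 1(1)[OF less r_in False refl] by blast
      have "f = (j + q1) + (e + q2)" using f_eq je(3) by (simp add: ac_simps)
      moreover have "j + q1 \<in> J" "e + q2 \<in> ?E"
        using ideal_add J E je(1,2) q(1,2) by blast+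
      moreover have "keys_below \<delta> (j + q1)" "keys_below \<delta> (e + q2)"
        using keys_below_trans less je(4,5) q(3,4) keys_below_add by blast+
      ultimately show ?thesis unfolding 1(4)[symmetric] by blast
    qed
  qed
qed

lemma lead_term_reduction:
  fixes J :: "('n, 'k::field) mpoly set"
  assumes J: "is_ideal J"
    and nice: "lead_exps (ideal_sum J (mono_ideal M)) \<subseteq> multiples (lead_exps J \<union> M)"
    and j: "j \<in> J" "j \<noteq> 0" "lead_exp ord j \<in> multiples M"
  shows "\<exists>j'\<in>J. j - j' \<in> mono_ideal M \<and> (j' = 0 \<or> ord_less (lead_exp ord j') (lead_exp ord j))"
proof -
  let ?E = "mono_ideal M :: ('n, 'k) mpoly set"
  let ?s = "lead_exp ord j"
  define r where "r = j - single ?s (lookup j ?s)"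
  have single_E: "single ?s (lookup j ?s) \<in> ?E"
    using j(3) by (rule single_in_mono_ideal)
  show ?thesis
  proof (cases "r = 0")
    case True
    then have "j - 0 \<in> ?E" using single_E unfolding r_def by simp
    then show ?thesis using ideal_zero[OF J] by blast
  next
    case False
    have "r \<in> ideal_sum J ?E"
      unfolding r_def ideal_sum_def using j(1) single_E ideal_gen_superset
      by (blast intro: ideal_diff[OF ideal_gen_is_ideal])
    then obtain j' e where j': "j' \<in> J" "e \<in> ?E" "r = j' + e" "keys_below (lead_exp ord r) j'"
      using standard_representation[OF J nice _ False] by blast
    have "keys_below ?s r"
      unfolding r_def using lead_exp_in_keys_below(2)[OF j(2)] keys_below_single by (rule keys_below_diff)
    moreover have "lookup r ?s = 0"
      unfolding r_def by (simp add: lookup_minus)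
    ultimately have less: "ord_less (lead_exp ord r) ?s"
      using False by (intro lead_exp_less)
    have "j - j' = single ?s (lookup j ?s) + e"
      using j'(3) unfolding r_def by (simp add: algebra_simps)
    then have "j - j' \<in> ?E"
      using single_E j'(2) ideal_add[OF mono_ideal_is_ideal] by simp
    moreover have "j' = 0 \<or> ord_less (lead_exp ord j') ?s"
      using lead_exp_in_keys_below(1)[of j'] j'(4) less ord_le_less_trans
      unfolding keys_below_def by blast
    ultimately show ?thesis using j'(1) by blast
  qed
qed

lemma lead_exps_ideal_sum_UN:
  fixes J :: "('n, 'k::field) mpoly set" and M :: "'i \<Rightarrow> ('n \<Rightarrow>\<^sub>0 nat) set"
  assumes J: "is_ideal J"
    and nice: "\<And>i. i \<in> L \<Longrightarrow>
      lead_exps (ideal_sum J (mono_ideal (M i))) \<subseteq> multiples (lead_exps J \<union> M i)"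
  shows "lead_exps (ideal_sum J (mono_ideal (\<Union>i\<in>L. M i))) \<subseteq> multiples (lead_exps J \<union> (\<Union>i\<in>L. M i))"
proof
  let ?U = "\<Union>i\<in>L. M i"
  let ?E = "mono_ideal ?U :: ('n, 'k) mpoly set"
  fix t assume "t \<in> lead_exps (ideal_sum J ?E)"
  then obtain f where f: "f \<in> ideal_sum J ?E" "f \<noteq> 0" "t = lead_exp ord f"
    unfolding lead_exps_def by blast
  show "t \<in> multiples (lead_exps J \<union> ?U)"
  proof (rule ccontr)
    assume "t \<notin> multiples (lead_exps J \<union> ?U)"
    then have tJ: "t \<notin> lead_exps J" and tU: "t \<notin> multiples ?U"
      using multiples_superset by (auto simp: multiples_Un)
    then have f_notin: "f \<notin> ?E"
      using lead_exp_in_keys_below(1)[OF f(2)] f(3) unfolding mono_ideal_def by blast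
    define R where "R = {j \<in> J. f - j \<in> ?E}"
    obtain a b where "a \<in> J" "b \<in> ?E" "f = a + b"
      using f(1) ideal_sum_eq[OF J mono_ideal_is_ideal] by blast
    then have "lead_exp ord a \<in> lead_exp ord ` R" unfolding R_def by simp
    then obtain j where j: "j \<in> R"
      and min: "\<And>j'. j' \<in> R \<Longrightarrow> \<not> ord_less (lead_exp ord j') (lead_exp ord j)"
    proof -
      obtain z where "z \<in> lead_exp ord ` R" "\<And>y. ord_less y z \<Longrightarrow> y \<notin> lead_exp ord ` R"
        using wfp_eq_minimal[THEN iffD1, rule_format, OF wfP_ord_less \<open>lead_exp ord a \<in> lead_exp ord ` R\<close>]
        by blast
      then show ?thesis using that by blast
    qed
    have R_nonzero: "j' \<noteq> 0" if "j' \<in> R" for j'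
      using that f_notin unfolding R_def by auto
    let ?s = "lead_exp ord j" and ?e = "f - j"
    have e: "?e \<in> ?E" "f = j + ?e" using j unfolding R_def by simp_all
    have "?s \<in> multiples ?U"
    proof -
      have "t = ?s \<or> ?s \<in> keys ?e \<or> t \<in> keys ?e"
        using lead_exp_add_cases[OF R_nonzero[OF j], of ?e] e(2) f(2,3) by simp
      moreover have "?s \<in> lead_exps J" using j R_nonzero[OF j] unfolding R_def lead_exps_def by blast
      ultimately show ?thesis using tJ tU e(1) unfolding mono_ideal_def by blast
    qed
    then obtain i where i: "i \<in> L" "?s \<in> multiples (M i)" by (auto simp: multiples_UN)
    then obtain j' where j': "j' \<in> J" "j - j' \<in> mono_ideal (M i)"
      "j' = 0 \<or> ord_less (lead_exp ord j') ?s"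
      using lead_term_reduction[OF J nice[OF i(1)]] j R_nonzero[OF j] unfolding R_def by blast
    have "mono_ideal (M i) \<subseteq> ?E" using i(1) by (intro mono_ideal_mono) blast
    then have "?e + (j - j') \<in> ?E" using ideal_add[OF mono_ideal_is_ideal e(1)] j'(2) by blast
    then have "j' \<in> R" unfolding R_def using j'(1) by simp
    then show False using min R_nonzero j'(3) by blast
  qed
qed

end

theorem mainTheorem8:
  fixes ord :: "('n::finite \<Rightarrow>\<^sub>0 nat) \<Rightarrow> ('n \<Rightarrow>\<^sub>0 nat) \<Rightarrow> bool"
    and J :: "('n, 'k::field) mpoly set"
    and \<Lambda> :: "'i set"
    and E :: "'i \<Rightarrow> ('n, 'k) mpoly set"
  assumes "monomial_order ord"
    and "is_ideal J"
    and "\<And>i. i \<in> \<Lambda> \<Longrightarrow> monomial_ideal (E i)"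
    and "\<And>i. i \<in> \<Lambda> \<Longrightarrow> G_nice ord J (E i)"
  shows "G_nice ord J (ideal_Sum \<Lambda> E)"
proof -
  interpret monomial_ord ord by unfold_locales fact
  have "\<forall>i\<in>\<Lambda>. \<exists>M. E i = mono_ideal M"
    using assms(3) unfolding monomial_ideal_iff by blast
  then obtain M where M: "\<And>i. i \<in> \<Lambda> \<Longrightarrow> E i = mono_ideal (M i)"
    by (metis bchoice)
  have nice: "lead_exps (ideal_sum J (mono_ideal (M i))) \<subseteq> multiples (lead_exps J \<union> M i)"
    if "i \<in> \<Lambda>" for i
    using assms(4)[OF that] unfolding M[OF that] G_nice_mono_ideal_iff .
  have sum_eq: "ideal_Sum \<Lambda> E = mono_ideal (\<Union>i\<in>\<Lambda>. M i)"
    using M ideal_Sum_mono_ideal[of \<Lambda> M] unfolding ideal_Sum_def by simp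
  show ?thesis
    unfolding sum_eq G_nice_mono_ideal_iff using lead_exps_ideal_sum_UN[OF assms(2), of \<Lambda> M] nice .
qed

end
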